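(* Let $W\in\mathbb{R}^{m\times n}$ have a directed spanning set of $\mathbb{R}^n$ with respect to every $x\in\mathbb{R}^n$, let $x_0,x_1\in\mathbb{R}^n$, and for $a,b\in\mathbb{R}^n$ let $\ell^{a,b}(t)=(1-t)a+tb$, $t\in[0,1]$. Suppose there is $t'\in(0,1)$ such that for all $t\in[0,1]$, $W|_{S(\ell^{x_0,x_1}(t),W)}=W|_{S(x_0,W)}$ if $t<t'$ and $W|_{S(\ell^{x_0,x_1}(t),W)}=W|_{S(x_1,W)}$ if $t>t'$. Suppose further that there is $\delta>0$ such that for every $\delta x\in\mathbb{R}^n$ with $\|\delta x\|_2<\delta$ there is $\delta t$ with $W|_{S(\ell^{x_0,x_1+\delta x}(t),W)}=W|_{S(x_0,W)}$ if $t<t'+\delta t$ and $W|_{S(\ell^{x_0,x_1+\delta x}(t),W)}=W|_{S(x_1,W)}$ if $t>t'+\delta t$. Then $$\|\operatorname{ReLU}(Wx_0)-\operatorname{ReLU}(Wx_1)\|_2\ge\frac{1}{\sqrt2}\min\big(\sigma(W|_{S(x_0,W)}),\sigma(W|_{S(x_1,W)})\big)\|x_0-x_1\|_2.$$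
   Context: For $W$ with rows $w_1,\dots,w_m$ and $x\in\mathbb{R}^n$, $S(x,W)=\{j:\langle w_j,x\rangle\ge 0\}$; for an index set $\mathcal{I}$, $W|_{\mathcal{I}}$ is the $m\times n$ matrix whose $j$-th row is $w_j$ if $j\in\mathcal{I}$ and zero otherwise. $\sigma(M)$ is the smallest singular value of $M$. $W$ has a directed spanning set of $\mathbb{R}^n$ w.r.t. $x$ if $\{w_j: j\in S(x,W)\}$ spans $\mathbb{R}^n$. $\operatorname{ReLU}(y)=\max(y,0)$ componentwise. *)

theory Defs
  imports "HOL-Analysis.Analysis"
begin

text \<open>Matrices W in R^(m x n) are rendered as real^'n^'m; row j is W $ j.\<close>

definition actS :: "real^'n \<Rightarrow> real^'n^'m \<Rightarrow> 'm set" where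
  "actS x W = {j. W $ j \<bullet> x \<ge> 0}"

definition restrict_rows :: "real^'n^'m \<Rightarrow> 'm set \<Rightarrow> real^'n^'m" where
  "restrict_rows W I = (\<chi> j. if j \<in> I then W $ j else 0)"

definition directed_spanning :: "real^'n^'m \<Rightarrow> real^'n \<Rightarrow> bool" where
  "directed_spanning W x \<longleftrightarrow> span {W $ j | j. j \<in> actS x W} = UNIV"

definition sigma_min :: "real^'n^'m \<Rightarrow> real" where
  "sigma_min M = Inf {norm (M *v x) | x. norm x = 1}"

definition relu :: "real^'m \<Rightarrow> real^'m" where
  "relu y = (\<chi> j. max (y $ j) 0)"

definition seg :: "real^'n \<Rightarrow> real^'n \<Rightarrow> real \<Rightarrow> real^'n" where
  "seg a b t = (1 - t) *\<^sub>R a + t *\<^sub>R b"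

end

theory Submission
  imports Defs
begin

text \<open>
  Since \<open>ReLU(W x) = W|\<^bsub>S(x,W)\<^esub> x\<close>, the network is linear with matrix \<open>A = W|\<^bsub>S(x0,W)\<^esub>\<close>
  on the segment before the switch point \<open>p = \<ell>(t')\<close> and with \<open>B = W|\<^bsub>S(x1,W)\<^esub>\<close> after it.
  Continuity of ReLU forces \<open>A p = B p\<close>, so with \<open>d = x0 - x1\<close> the output difference is
  \<open>t' A d + (1 - t') B d\<close>. The two summands have nonnegative inner product, because
  coordinatewise their product is either \<open>0\<close> or a square, and each has norm at least
  \<open>k = min(\<sigma>(A), \<sigma>(B)) |d|\<close>; hence the squared norm of the sum is at least
  \<open>(t'\<^sup>2 + (1 - t')\<^sup>2) k\<^sup>2 \<ge> k\<^sup>2 / 2\<close>.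
\<close>

lemma restrict_rows_mult_nth:
  "(restrict_rows W I *v y) $ j = (if j \<in> I then W $ j \<bullet> y else 0)"
  by (simp add: restrict_rows_def matrix_vector_mul_component)

lemma relu_matrix_vector_mult: "relu (W *v y) = restrict_rows W (actS y W) *v y"
  by (simp add: vec_eq_iff relu_def restrict_rows_def actS_def matrix_vector_mul_component)

lemma isCont_relu: "isCont relu y"
  unfolding isCont_def relu_def by (intro tendsto_intros)

lemma inner_restrict_rows_mult_nonneg:
  "(restrict_rows W I *v d) \<bullet> (restrict_rows W J *v d) \<ge> 0"
  unfolding inner_vec_def by (rule sum_nonneg) (simp add: restrict_rows_mult_nth)

lemma sigma_min_nonneg: "sigma_min (M :: real^'n^'m) \<ge> 0"
proof -
  have "norm (axis undefined (1::real) :: real^'n) = 1" by simp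
  then have "{norm (M *v x) | x. norm x = 1} \<noteq> {}" by blast
  then show ?thesis unfolding sigma_min_def by (rule cInf_greatest) auto
qed

lemma sigma_min_mult_norm_le: "sigma_min (M :: real^'n^'m) * norm d \<le> norm (M *v d)"
proof (cases "d = 0")
  case False
  let ?u = "(1 / norm d) *\<^sub>R d"
  have "norm ?u = 1" using False by simp
  then have "sigma_min M \<le> norm (M *v ?u)" unfolding sigma_min_def
    by (intro cInf_lower bdd_belowI[where m = 0]) auto
  also have "norm (M *v ?u) = norm (M *v d) / norm d"
    by (simp add: matrix_vector_mult_scaleR)
  finally show ?thesis using False by (simp add: field_simps)
qed simp

lemma isCont_eq_if_eventually_eq_within:
  fixes f g :: "'a::t2_space \<Rightarrow> 'b::t2_space"
  assumes "isCont f t" "isCont g t" "at t within S \<noteq> bot"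
    and "\<forall>\<^sub>F s in at t within S. f s = g s"
  shows "f t = g t"
proof -
  have f: "(f \<longlongrightarrow> f t) (at t within S)" and g: "(g \<longlongrightarrow> g t) (at t within S)"
    using assms(1,2) continuous_at_imp_continuous_at_within continuous_within by blast+
  have "(g \<longlongrightarrow> f t) (at t within S)"
    using Lim_transform_eventually[OF f assms(4)] .
  then show ?thesis
    using tendsto_unique[OF assms(3) _ g] by blast
qed

lemma restrict_rows_mult_eq_at_switch:
  fixes W :: "real^'n^'m" and x0 x1 :: "real^'n" and t' :: real
  assumes "0 < t'" "t' < 1"
    and switch: "\<forall>t\<in>{0..1}.
        (t < t' \<longrightarrow> restrict_rows W (actS (seg x0 x1 t) W) = restrict_rows W (actS x0 W)) \<and>
        (t > t' \<longrightarrow> restrict_rows W (actS (seg x0 x1 t) W) = restrict_rows W (actS x1 W))"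
  shows "restrict_rows W (actS x0 W) *v seg x0 x1 t' = restrict_rows W (actS x1 W) *v seg x0 x1 t'"
proof -
  define f where "f t = relu (W *v seg x0 x1 t)" for t
  have isCont_mult_seg: "isCont (\<lambda>t. M *v seg x0 x1 t) t'" for M :: "real^'n^'m"
    unfolding isCont_def seg_def
    by (intro bounded_linear.tendsto[OF matrix_vector_mul_bounded_linear] tendsto_intros)
  have "isCont f t'"
    unfolding f_def by (rule continuous_at_compose[OF isCont_mult_seg isCont_relu, unfolded o_def])
  moreover have "\<forall>\<^sub>F t in at_left t'. f t = restrict_rows W (actS x0 W) *v seg x0 x1 t"
    using eventually_at_left_real[OF \<open>0 < t'\<close>]
    by eventually_elim (use switch assms(1,2) in \<open>auto simp: f_def relu_matrix_vector_mult\<close>)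
  moreover have "\<forall>\<^sub>F t in at_right t'. f t = restrict_rows W (actS x1 W) *v seg x0 x1 t"
    using eventually_at_right_real[OF \<open>t' < 1\<close>]
    by eventually_elim (use switch assms(1,2) in \<open>auto simp: f_def relu_matrix_vector_mult\<close>)
  ultimately show ?thesis
    using isCont_eq_if_eventually_eq_within[OF _ isCont_mult_seg] trivial_limit_at_left_real
      trivial_limit_at_right_real by metis
qed

lemma norm_convex_comb_ge_if_inner_nonneg:
  fixes u v :: "'a::real_inner"
  assumes "u \<bullet> v \<ge> 0" "0 \<le> t" "t \<le> 1" "0 \<le> k" "k \<le> norm u" "k \<le> norm v"
  shows "k / sqrt 2 \<le> norm (t *\<^sub>R u + (1 - t) *\<^sub>R v)"
proof (rule power2_le_imp_le)
  have "(k / sqrt 2)\<^sup>2 = 1 / 2 * k\<^sup>2"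
    by (simp add: power_divide)
  also have "\<dots> \<le> (t\<^sup>2 + (1 - t)\<^sup>2) * k\<^sup>2"
  proof (rule mult_right_mono)
    show "1 / 2 \<le> t\<^sup>2 + (1 - t)\<^sup>2"
      using zero_le_power2[of "t - 1 / 2"] by (simp add: power2_eq_square algebra_simps)
  qed simp
  also have "\<dots> \<le> t\<^sup>2 * (norm u)\<^sup>2 + (1 - t)\<^sup>2 * (norm v)\<^sup>2 + 2 * t * (1 - t) * (u \<bullet> v)"
  proof -
    have "t\<^sup>2 * k\<^sup>2 \<le> t\<^sup>2 * (norm u)\<^sup>2" "(1 - t)\<^sup>2 * k\<^sup>2 \<le> (1 - t)\<^sup>2 * (norm v)\<^sup>2"
      using assms by (simp_all add: mult_left_mono power_mono)
    moreover have "0 \<le> 2 * t * (1 - t) * (u \<bullet> v)"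
      using assms by simp
    ultimately show ?thesis
      by (simp add: distrib_right)
  qed
  also have "\<dots> = (norm (t *\<^sub>R u + (1 - t) *\<^sub>R v))\<^sup>2"
    unfolding power2_norm_eq_inner
    by (simp add: inner_add_left inner_add_right inner_commute[of v u] power2_eq_square algebra_simps)
  finally show "(k / sqrt 2)\<^sup>2 \<le> (norm (t *\<^sub>R u + (1 - t) *\<^sub>R v))\<^sup>2" .
qed simp

theorem lemma6:
  fixes W :: "real^'n^'m" and x0 x1 :: "real^'n" and t' :: real
  assumes span: "\<forall>x. directed_spanning W x"
    and t'_range: "0 < t'" "t' < 1"
    and switch: "\<forall>t\<in>{0..1}.
        (t < t' \<longrightarrow> restrict_rows W (actS (seg x0 x1 t) W) = restrict_rows W (actS x0 W)) \<and>
        (t > t' \<longrightarrow> restrict_rows W (actS (seg x0 x1 t) W) = restrict_rows W (actS x1 W))"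
    and perturb: "\<exists>\<delta>>0. \<forall>dx :: real^'n. norm dx < \<delta> \<longrightarrow> (\<exists>dt. \<forall>t\<in>{0..1}.
        (t < t' + dt \<longrightarrow> restrict_rows W (actS (seg x0 (x1 + dx) t) W) = restrict_rows W (actS x0 W)) \<and>
        (t > t' + dt \<longrightarrow> restrict_rows W (actS (seg x0 (x1 + dx) t) W) = restrict_rows W (actS x1 W)))"
  shows "norm (relu (W *v x0) - relu (W *v x1)) \<ge>
     (1 / sqrt 2) * min (sigma_min (restrict_rows W (actS x0 W))) (sigma_min (restrict_rows W (actS x1 W))) * norm (x0 - x1)"
proof -
  define A where "A = restrict_rows W (actS x0 W)"
  define B where "B = restrict_rows W (actS x1 W)"
  define d where "d = x0 - x1"
  define k where "k = min (sigma_min A) (sigma_min B) * norm d"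
  have "A *v seg x0 x1 t' = B *v seg x0 x1 t'"
    unfolding A_def B_def by (rule restrict_rows_mult_eq_at_switch[OF t'_range switch])
  then have "relu (W *v x0) - relu (W *v x1) = t' *\<^sub>R (A *v d) + (1 - t') *\<^sub>R (B *v d)"
    by (simp add: relu_matrix_vector_mult A_def B_def d_def seg_def algebra_simps)
  moreover have "(A *v d) \<bullet> (B *v d) \<ge> 0"
    unfolding A_def B_def by (rule inner_restrict_rows_mult_nonneg)
  moreover have "0 \<le> k"
    unfolding k_def by (simp add: sigma_min_nonneg)
  moreover have "k \<le> sigma_min A * norm d" "k \<le> sigma_min B * norm d"
    unfolding k_def by (simp_all add: mult_right_mono)
  then have "k \<le> norm (A *v d)" "k \<le> norm (B *v d)"
    using sigma_min_mult_norm_le order_trans by blast+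
  ultimately have "k / sqrt 2 \<le> norm (relu (W *v x0) - relu (W *v x1))"
    using norm_convex_comb_ge_if_inner_nonneg[of "A *v d" "B *v d" t' k] t'_range by simp
  then show ?thesis
    unfolding k_def A_def B_def d_def by simp
qed

end
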